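(* Let $\Pi_0\preceq\Pi_1\preceq\cdots$ be a sequence of orthogonal projectors on a Hilbert space $\mathcal H$, and let $A_1,\dots,A_t$ be operators on $\mathcal H$ with $\|A_i\|_{\mathrm{op}}\le1$ such that for all integers $a,b\ge0$ and all $i$, $\|(\mathrm{id}-\Pi_{a+b})A_i\Pi_a\|_{\mathrm{op}}\le\varepsilon^{b+1}$. Then for every integer $\lambda\ge0$ and every state $|\psi\rangle$ with $\Pi_0|\psi\rangle=|\psi\rangle$, $$\big\|(\mathrm{id}-\Pi_\lambda)A_t\cdots A_1|\psi\rangle\big\|\le\binom{t+\lambda}{t-1}\varepsilon^{\lambda+1}.$$ *)

theory Defs
  imports "HOL-Analysis.Analysis"
begin

definition orth_proj :: "('a::{real_inner,complete_space} \<Rightarrow>\<^sub>L 'a) \<Rightarrow> bool" where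
  "orth_proj P \<longleftrightarrow> P o\<^sub>L P = P \<and> (\<forall>x y. inner (P x) y = inner x (P y))"

text \<open>Loewner order on orthogonal projectors: P below Q iff range P is contained in range Q,
  i.e. Q P = P.\<close>
definition proj_le :: "('a::{real_inner,complete_space} \<Rightarrow>\<^sub>L 'a) \<Rightarrow> ('a \<Rightarrow>\<^sub>L 'a) \<Rightarrow> bool" where
  "proj_le P Q \<longleftrightarrow> Q o\<^sub>L P = P"

fun op_prod :: "(nat \<Rightarrow> ('a::real_normed_vector \<Rightarrow>\<^sub>L 'a)) \<Rightarrow> nat \<Rightarrow> ('a \<Rightarrow>\<^sub>L 'a)" where
  "op_prod A 0 = id_blinfun"
| "op_prod A (Suc n) = A (Suc n) o\<^sub>L op_prod A n"

end

theory Submission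
  imports Defs
begin

text \<open>
  Let y_k = A_k ... A_1 psi and let c k m bound the leakage norm ((id - Pi_m) y_k) in units of
  eps^(m+1). Split y_k along the telescoping sum
  y = Pi_0 y + (sum over j < lam of Pi_(j+1) (id - Pi_j) y) + (id - Pi_lam) y and apply A_(k+1):
  the first piece leaks at most eps^(lam+1), the j-th at most eps^(lam-j) * c k j * eps^(j+1),
  and the last at most c k lam * eps^(lam+1) because norm A_(k+1) <= 1. Hence
  c (k+1) lam = 1 + (sum over j <= lam of c k j) with c 0 = 0, and the hockey-stick identity
  solves this recursion as c k lam = (k + lam) choose (k - 1).
\<close>

fun leak_coeff :: "nat \<Rightarrow> nat \<Rightarrow> nat" where
  "leak_coeff 0 m = 0"
| "leak_coeff (Suc k) m = 1 + (\<Sum>j\<le>m. leak_coeff k j)"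

lemma hockey_stick_Suc:
  "1 + (\<Sum>j\<le>m. (Suc q + j) choose q) = (Suc (Suc q) + m) choose (Suc q)"
  by (induction m) simp_all

lemma leak_coeff_Suc_eq_binomial: "leak_coeff (Suc q) m = (Suc q + m) choose q"
proof (induction q arbitrary: m)
  case 0
  show ?case by simp
next
  case (Suc q)
  show ?case
    using Suc.IH hockey_stick_Suc[where m=m and q=q] by simp
qed

(* Only an inequality: for k = 0 the truncated k - 1 makes the right-hand side 1. *)
lemma leak_coeff_le_binomial: "leak_coeff k m \<le> (k + m) choose (k - 1)"
  by (cases k) (simp_all del: leak_coeff.simps(2) add: leak_coeff_Suc_eq_binomial)

lemma orth_proj_idem:
  assumes "orth_proj P"
  shows "P (P x) = P x"
  using assms unfolding orth_proj_def by (metis blinfun_apply_blinfun_compose)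

lemma orth_proj_complement_norm_le:
  assumes "orth_proj P"
  shows "norm ((id_blinfun - P) x) \<le> norm x"
proof -
  have "inner (P x) (P x) = inner x (P (P x))"
    using assms unfolding orth_proj_def by blast
  then have "orthogonal (x - P x) (P x)"
    using orth_proj_idem[OF assms] by (simp add: orthogonal_def inner_diff_left)
  then have "(norm x)\<^sup>2 = (norm (x - P x))\<^sup>2 + (norm (P x))\<^sup>2"
    using norm_add_Pythagorean by fastforce
  then have "(norm (x - P x))\<^sup>2 \<le> (norm x)\<^sup>2"
    by simp
  then have "norm (x - P x) \<le> norm x"
    by (rule power2_le_imp_le) simp
  then show ?thesis
    by (simp add: blinfun.diff_left)
qed

lemma proj_chain_absorb:
  assumes proj: "\<And>n. orth_proj (P n)"
    and mono: "\<And>n. proj_le (P n) (P (Suc n))"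
    and "n \<le> m"
  shows "P m (P n x) = P n x"
  using \<open>n \<le> m\<close>
proof (induction m rule: dec_induct)
  case base
  show ?case by (rule orth_proj_idem[OF proj])
next
  case (step m)
  have "P (Suc m) (P m y) = P m y" for y
    using mono[of m] unfolding proj_le_def by (metis blinfun_apply_blinfun_compose)
  then show ?case using step.IH by metis
qed

lemma proj_chain_telescope:
  assumes proj: "\<And>n. orth_proj (P n)"
    and mono: "\<And>n. proj_le (P n) (P (Suc n))"
  shows "y = P 0 y + (\<Sum>j<l. P (Suc j) ((id_blinfun - P j) y)) + (id_blinfun - P l) y"
proof -
  have "P (Suc j) (P j y) = P j y" for j
    using proj_chain_absorb[of P, OF proj mono, of j "Suc j"] by simp
  moreover have "(\<Sum>j<l. P (Suc j) y - P j y) = P l y - P 0 y"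
    by (rule sum_lessThan_telescope)
  ultimately show ?thesis
    by (simp add: blinfun.diff_left blinfun.diff_right)
qed

lemma leak_from_level:
  assumes leak: "\<And>a b. norm ((id_blinfun - P (a + b)) o\<^sub>L B o\<^sub>L P a) \<le> \<epsilon> ^ (b + 1)"
    and "a \<le> l"
  shows "norm ((id_blinfun - P l) (B (P a z))) \<le> \<epsilon> ^ (l - a + 1) * norm z"
proof -
  have "norm ((id_blinfun - P l) (B (P a z))) = norm (((id_blinfun - P l) o\<^sub>L B o\<^sub>L P a) z)"
    by simp
  also have "\<dots> \<le> norm ((id_blinfun - P l) o\<^sub>L B o\<^sub>L P a) * norm z"
    by (rule norm_blinfun)
  also have "\<dots> \<le> \<epsilon> ^ (l - a + 1) * norm z"
    using leak[of a "l - a"] \<open>a \<le> l\<close> by (intro mult_right_mono) simp_all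
  finally show ?thesis .
qed

lemma leak_one_gate:
  fixes P :: "nat \<Rightarrow> ('a::{real_inner,complete_space} \<Rightarrow>\<^sub>L 'a)"
  assumes proj: "\<And>n. orth_proj (P n)"
    and mono: "\<And>n. proj_le (P n) (P (Suc n))"
    and eps: "0 \<le> \<epsilon>"
    and normB: "norm B \<le> 1"
    and leak: "\<And>a b. norm ((id_blinfun - P (a + b)) o\<^sub>L B o\<^sub>L P a) \<le> \<epsilon> ^ (b + 1)"
    and normy: "norm y \<le> 1"
    and leaky: "\<And>j. norm ((id_blinfun - P j) y) \<le> c j * \<epsilon> ^ (j + 1)"
  shows "norm ((id_blinfun - P l) (B y)) \<le> (1 + (\<Sum>j\<le>l. c j)) * \<epsilon> ^ (l + 1)"
proof -
  define T where "T z = (id_blinfun - P l) (B z)" for z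
  define y' where "y' j = P (Suc j) ((id_blinfun - P j) y)" for j
  have split: "T y = T (P 0 y) + (\<Sum>j<l. T (y' j)) + T ((id_blinfun - P l) y)"
    unfolding T_def y'_def
    by (subst proj_chain_telescope[of P, OF proj mono, of y l])
      (simp add: blinfun.add_right blinfun.sum_right)
  have head: "norm (T (P 0 y)) \<le> \<epsilon> ^ (l + 1)"
  proof -
    have "norm (T (P 0 y)) \<le> \<epsilon> ^ (l + 1) * norm y"
      using leak_from_level[OF leak, of 0 l y] unfolding T_def by simp
    also have "\<dots> \<le> \<epsilon> ^ (l + 1)"
      by (rule mult_left_le) (simp_all add: normy eps)
    finally show ?thesis .
  qed
  have middle: "norm (T (y' j)) \<le> c j * \<epsilon> ^ (l + 1)" if "j < l" for j
  proof -
    have exp: "l - Suc j + 1 = l - j" "l - j + (j + 1) = l + 1"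
      using that by simp_all
    have "norm (T (y' j)) \<le> \<epsilon> ^ (l - j) * norm ((id_blinfun - P j) y)"
      using leak_from_level[OF leak, of "Suc j" l] that unfolding T_def y'_def exp(1) by simp
    also have "\<dots> \<le> \<epsilon> ^ (l - j) * (c j * \<epsilon> ^ (j + 1))"
      by (rule mult_left_mono[OF leaky]) (simp add: eps)
    also have "\<dots> = c j * \<epsilon> ^ (l + 1)"
      by (simp only: exp(2)[symmetric] power_add mult_ac)
    finally show ?thesis .
  qed
  have tail: "norm (T ((id_blinfun - P l) y)) \<le> c l * \<epsilon> ^ (l + 1)"
  proof -
    have "norm (T ((id_blinfun - P l) y)) \<le> norm (B ((id_blinfun - P l) y))"
      unfolding T_def by (rule orth_proj_complement_norm_le[OF proj])
    also have "\<dots> \<le> norm B * norm ((id_blinfun - P l) y)"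
      by (rule norm_blinfun)
    also have "\<dots> \<le> norm ((id_blinfun - P l) y)"
      using normB by (simp add: mult_left_le_one_le)
    finally show ?thesis
      using leaky[of l] by simp
  qed
  have "norm (\<Sum>j<l. T (y' j)) \<le> (\<Sum>j<l. c j * \<epsilon> ^ (l + 1))"
    using middle by (intro order_trans[OF norm_sum] sum_mono) simp
  moreover have "norm (T y) \<le> norm (T (P 0 y)) + norm (\<Sum>j<l. T (y' j))
      + norm (T ((id_blinfun - P l) y))"
    unfolding split by (rule order_trans[OF norm_triangle_ineq add_right_mono[OF norm_triangle_ineq]])
  ultimately have "norm (T y) \<le> \<epsilon> ^ (l + 1) + (\<Sum>j<l. c j * \<epsilon> ^ (l + 1)) + c l * \<epsilon> ^ (l + 1)"
    using head tail by linarith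
  also have "\<dots> = (1 + (\<Sum>j\<le>l. c j)) * \<epsilon> ^ (l + 1)"
    by (simp add: lessThan_Suc_atMost[symmetric] sum_distrib_right[symmetric] distrib_right)
  finally show ?thesis
    unfolding T_def .
qed

lemma norm_op_prod_le_one:
  assumes "\<And>i. i \<in> {1..k} \<Longrightarrow> norm (A i) \<le> 1"
  shows "norm (op_prod A k) \<le> 1"
  using assms
proof (induction k)
  case 0
  show ?case by (simp add: norm_blinfun_id_le)
next
  case (Suc k)
  have "norm (op_prod A (Suc k)) \<le> norm (A (Suc k)) * norm (op_prod A k)"
    by (simp add: norm_blinfun_compose)
  also have "\<dots> \<le> 1"
    using Suc by (intro mult_le_one) auto
  finally show ?case .
qed

lemma op_prod_leak_le:
  fixes P :: "nat \<Rightarrow> ('a::{real_inner,complete_space} \<Rightarrow>\<^sub>L 'a)"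
  assumes proj: "\<And>n. orth_proj (P n)"
    and mono: "\<And>n. proj_le (P n) (P (Suc n))"
    and eps: "0 \<le> \<epsilon>"
    and normA: "\<And>i. i \<in> {1..k} \<Longrightarrow> norm (A i) \<le> 1"
    and leak: "\<And>i a b. i \<in> {1..k} \<Longrightarrow>
                 norm ((id_blinfun - P (a + b)) o\<^sub>L A i o\<^sub>L P a) \<le> \<epsilon> ^ (b + 1)"
    and norm\<psi>: "norm \<psi> \<le> 1"
    and init: "P 0 \<psi> = \<psi>"
  shows "norm ((id_blinfun - P l) (op_prod A k \<psi>)) \<le> real (leak_coeff k l) * \<epsilon> ^ (l + 1)"
  using normA leak
proof (induction k arbitrary: l)
  case 0
  have "P l \<psi> = \<psi>"
    using proj_chain_absorb[of P, OF proj mono, of 0 l \<psi>] init by simp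
  then show ?case
    by (simp add: blinfun.diff_left)
next
  case (Suc k)
  have "norm (op_prod A k) \<le> 1"
    using Suc.prems(1) by (intro norm_op_prod_le_one) simp
  then have "norm (op_prod A k) * norm \<psi> \<le> 1"
    using norm\<psi> by (simp add: mult_le_one)
  then have "norm (op_prod A k \<psi>) \<le> 1"
    using norm_blinfun[of "op_prod A k" \<psi>] by linarith
  moreover have "norm ((id_blinfun - P j) (op_prod A k \<psi>)) \<le> real (leak_coeff k j) * \<epsilon> ^ (j + 1)"
    for j
    using Suc by simp
  ultimately have "norm ((id_blinfun - P l) (A (Suc k) (op_prod A k \<psi>)))
      \<le> (1 + (\<Sum>j\<le>l. real (leak_coeff k j))) * \<epsilon> ^ (l + 1)"
    using Suc.prems by (intro leak_one_gate[of P, OF proj mono eps]) simp_all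
  then show ?case
    by simp
qed

theorem mainTheorem17:
  fixes Pr :: "nat \<Rightarrow> ('a::{real_inner,complete_space} \<Rightarrow>\<^sub>L 'a)"
    and A :: "nat \<Rightarrow> ('a \<Rightarrow>\<^sub>L 'a)"
    and t :: nat and \<epsilon> :: real
  assumes proj: "\<And>n. orth_proj (Pr n)"
    and mono: "\<And>n. proj_le (Pr n) (Pr (Suc n))"
    and eps: "0 \<le> \<epsilon>"
    and normA: "\<And>i. i \<in> {1..t} \<Longrightarrow> norm (A i) \<le> 1"
    and leak: "\<And>i a b. i \<in> {1..t} \<Longrightarrow>
                 norm ((id_blinfun - Pr (a + b)) o\<^sub>L A i o\<^sub>L Pr a) \<le> \<epsilon> ^ (b + 1)"
  shows "\<forall>(lam::nat) (\<psi>::'a). norm \<psi> = 1 \<longrightarrow> Pr 0 \<psi> = \<psi> \<longrightarrow>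
           norm ((id_blinfun - Pr lam) (op_prod A t \<psi>))
             \<le> real ((t + lam) choose (t - 1)) * \<epsilon> ^ (lam + 1)"
proof (intro allI impI)
  fix lam :: nat and \<psi> :: 'a
  assume "norm \<psi> = 1" and "Pr 0 \<psi> = \<psi>"
  then have "norm ((id_blinfun - Pr lam) (op_prod A t \<psi>)) \<le> real (leak_coeff t lam) * \<epsilon> ^ (lam + 1)"
    by (intro op_prod_leak_le[OF proj mono eps normA leak]) simp_all
  also have "\<dots> \<le> real ((t + lam) choose (t - 1)) * \<epsilon> ^ (lam + 1)"
    using eps leak_coeff_le_binomial by (intro mult_right_mono) simp_all
  finally show "norm ((id_blinfun - Pr lam) (op_prod A t \<psi>))
      \<le> real ((t + lam) choose (t - 1)) * \<epsilon> ^ (lam + 1)" .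
qed

end
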